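(* Let $\mathbb V$ be the 2-vector space of a 2-term complex $V_1\xrightarrow{\mathrm d}V_0$, and let $L=\{X+\pi(\xi)+\xi:X\in\mathcal D,\xi\in\mathcal D^0\}$ be a Dirac structure of the omni-Lie 2-algebra $\mathfrak{gl}(\mathbb V)\oplus\mathbb V$ with characteristic pair $(\mathcal D,\pi)$, and equip $\mathcal D^0$ with the strict Lie 2-algebra bracket $[\xi,\eta]_{\mathcal D^0}=\pi(\xi)(\eta)$. Then an element $N\in\mathfrak{gl}(\mathbb V)$ lies in the normalizer $N_L$ if and only if (1) $[N,X]\in\mathcal D$ for all $X\in\mathcal D$, and (2) for all $\xi,\eta\in\mathcal D^0$, $N(\xi)\in\mathcal D^0$ and $N([\xi,\eta]_{\mathcal D^0})=[\xi,N(\eta)]_{\mathcal D^0}+[N(\xi),\eta]_{\mathcal D^0}$.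
   Context: All vector spaces are finite-dimensional over $\mathbb R$. For a 2-term complex $V_1\xrightarrow{\mathrm d}V_0$, $\mathbb V$ has objects $V_0$, morphisms $V_0\oplus V_1$ ($u+m$), $s(u+m)=u$, $t(u+m)=u+\mathrm dm$. Let $\mathrm{End}^0_{\mathrm d}(\mathbb V)=\{A=(A_0,A_1):A_0\mathrm d=\mathrm dA_1\}$, $\mathrm{End}^1(\mathbb V)=\mathrm{Hom}(V_0,V_1)$, $\delta\phi=(\mathrm d\phi,\phi\mathrm d)$; brackets $[A,B]$ componentwise commutator, $[A,\phi]=-[\phi,A]=A_1\phi-\phi A_0$, $[\phi,\psi]_\delta=\phi\mathrm d\psi-\psi\mathrm d\phi$. The strict Lie 2-algebra $\mathfrak{gl}(\mathbb V)$ has objects $\mathrm{End}^0_{\mathrm d}(\mathbb V)$, morphisms $A+\phi$, $s(A+\phi)=A$, $t(A+\phi)=A+\delta\phi$, bracket $[A+\phi,B+\psi]=[A,B]+[\phi,\psi]_\delta+[A,\psi]+[\phi,B]$, and acts on $\mathbb V$ by $A(u)=A_0u$, $(A+\phi)(u+m)=A_0u+(A_1m+\phi(u+\mathrm dm))$. The omni-Lie 2-algebra is $\mathfrak{gl}(\mathbb V)\oplus\mathbb V$ with pairing $\langle A+\phi+u+m,B+\psi+v+n\rangle=\tfrac12((A+\phi)(v+n)+(B+\psi)(u+m))$ and bracket $[\![A+\phi+u+m,B+\psi+v+n]\!]=[A+\phi,B+\psi]+\tfrac12((A+\phi)(v+n)-(B+\psi)(u+m))$ (similar formulas on objects), and the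 bracket $\{e_1,e_2\}=[\![e_1,e_2]\!]+\langle e_1,e_2\rangle$, i.e. $\{A+\phi+u+m,B+\psi+v+n\}=[A+\phi,B+\psi]+(A+\phi)(v+n)$. $L^\perp=\{e:\langle e,l\rangle=0\ \forall l\in L\}$; a Dirac structure is a 2-sub-vector space $L=L^\perp$ closed under $[\![\cdot,\cdot]\!]$. Characteristic pair of a maximal isotropic $L$: $\mathcal D=L\cap\mathfrak{gl}(\mathbb V)$, $\mathcal D^0=\{\xi\in\mathbb V:X(\xi)=0\ \forall X\in\mathcal D\}$ (levelwise), and a linear functor $\pi:\mathbb V\to\mathfrak{gl}(\mathbb V)$ with $\pi(\xi)(\eta)=-\pi(\eta)(\xi)$ on $\mathcal D^0$ and $L=\{X+\pi(\xi)+\xi\}$. The normalizer of a 2-sub-vector space $K\subset\mathfrak{gl}(\mathbb V)\oplus\mathbb V$ is $N_K=\{N\in\mathfrak{gl}(\mathbb V):\{N,k\}\in K\ \forall k\in K\}$ (levelwise, $N$ viewed as $N+0$). *)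

theory Defs
  imports "HOL-Analysis.Analysis"
begin

text \<open>2-term complex V1 --d--> V0, with V0 = 'a, V1 = 'b (finite-dimensional real spaces).
  Level 0 of gl(V): pairs (A0,A1); level 1: (A, phi) with phi : V0 -> V1.
  Level 0 of the omni-Lie 2-algebra: (A, u); level 1: ((A,phi),(u,m)).\<close>

type_synonym ('a,'b) gl0 = "('a \<Rightarrow> 'a) \<times> ('b \<Rightarrow> 'b)"
type_synonym ('a,'b) gl1 = "('a,'b) gl0 \<times> ('a \<Rightarrow> 'b)"
type_synonym ('a,'b) om0 = "('a,'b) gl0 \<times> 'a"
type_synonym ('a,'b) om1 = "('a,'b) gl1 \<times> ('a \<times> 'b)"

definition End0 :: "('b::real_vector \<Rightarrow> 'a::real_vector) \<Rightarrow> ('a,'b) gl0 set" where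
  "End0 d = {(A0, A1). linear A0 \<and> linear A1 \<and> A0 \<circ> d = d \<circ> A1}"

definition Gl1 :: "('b::real_vector \<Rightarrow> 'a::real_vector) \<Rightarrow> ('a,'b) gl1 set" where
  "Gl1 d = {(A, phi). A \<in> End0 d \<and> linear phi}"

definition Om0 :: "('b::real_vector \<Rightarrow> 'a::real_vector) \<Rightarrow> ('a,'b) om0 set" where
  "Om0 d = End0 d \<times> UNIV"

definition Om1 :: "('b::real_vector \<Rightarrow> 'a::real_vector) \<Rightarrow> ('a,'b) om1 set" where
  "Om1 d = Gl1 d \<times> UNIV"

definition gl0_zero :: "('a::real_vector,'b::real_vector) gl0" where
  "gl0_zero = (\<lambda>x. 0, \<lambda>y. 0)"
definition gl0_add :: "('a::real_vector,'b::real_vector) gl0 \<Rightarrow> ('a,'b) gl0 \<Rightarrow> ('a,'b) gl0" where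
  "gl0_add A B = (\<lambda>x. fst A x + fst B x, \<lambda>y. snd A y + snd B y)"
definition gl0_scale :: "real \<Rightarrow> ('a::real_vector,'b::real_vector) gl0 \<Rightarrow> ('a,'b) gl0" where
  "gl0_scale c A = (\<lambda>x. c *\<^sub>R fst A x, \<lambda>y. c *\<^sub>R snd A y)"

definition gl1_zero :: "('a::real_vector,'b::real_vector) gl1" where
  "gl1_zero = (gl0_zero, \<lambda>x. 0)"
definition gl1_add :: "('a::real_vector,'b::real_vector) gl1 \<Rightarrow> ('a,'b) gl1 \<Rightarrow> ('a,'b) gl1" where
  "gl1_add N M = (gl0_add (fst N) (fst M), \<lambda>x. snd N x + snd M x)"
definition gl1_scale :: "real \<Rightarrow> ('a::real_vector,'b::real_vector) gl1 \<Rightarrow> ('a,'b) gl1" where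
  "gl1_scale c N = (gl0_scale c (fst N), \<lambda>x. c *\<^sub>R snd N x)"

definition om0_zero :: "('a::real_vector,'b::real_vector) om0" where
  "om0_zero = (gl0_zero, 0)"
definition om0_add :: "('a::real_vector,'b::real_vector) om0 \<Rightarrow> ('a,'b) om0 \<Rightarrow> ('a,'b) om0" where
  "om0_add e f = (gl0_add (fst e) (fst f), snd e + snd f)"
definition om0_scale :: "real \<Rightarrow> ('a::real_vector,'b::real_vector) om0 \<Rightarrow> ('a,'b) om0" where
  "om0_scale c e = (gl0_scale c (fst e), c *\<^sub>R snd e)"

definition om1_zero :: "('a::real_vector,'b::real_vector) om1" where
  "om1_zero = (gl1_zero, 0)"
definition om1_add :: "('a::real_vector,'b::real_vector) om1 \<Rightarrow> ('a,'b) om1 \<Rightarrow> ('a,'b) om1" where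
  "om1_add e f = (gl1_add (fst e) (fst f), snd e + snd f)"
definition om1_scale :: "real \<Rightarrow> ('a::real_vector,'b::real_vector) om1 \<Rightarrow> ('a,'b) om1" where
  "om1_scale c e = (gl1_scale c (fst e), c *\<^sub>R snd e)"

definition gl_br0 :: "('a,'b) gl0 \<Rightarrow> ('a,'b) gl0 \<Rightarrow> ('a::real_vector,'b::real_vector) gl0" where
  "gl_br0 A B = (\<lambda>x. fst A (fst B x) - fst B (fst A x), \<lambda>y. snd A (snd B y) - snd B (snd A y))"

text \<open>[A+phi, B+psi] = [A,B] + [phi,psi]_delta + [A,psi] + [phi,B], with
  [phi,psi]_delta = phi d psi - psi d phi, [A,psi] = A1 psi - psi A0, [phi,B] = phi B0 - B1 phi.\<close>
definition gl_br1 :: "('b::real_vector \<Rightarrow> 'a::real_vector) \<Rightarrow> ('a,'b) gl1 \<Rightarrow> ('a,'b) gl1 \<Rightarrow> ('a,'b) gl1" where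
  "gl_br1 d N M = (gl_br0 (fst N) (fst M),
     \<lambda>u. snd N (d (snd M u)) - snd M (d (snd N u))
        + snd (fst N) (snd M u) - snd M (fst (fst N) u)
        + snd N (fst (fst M) u) - snd (fst M) (snd N u))"

definition act0 :: "('a,'b) gl0 \<Rightarrow> 'a \<Rightarrow> 'a" where
  "act0 A u = fst A u"
definition act1 :: "('b::real_vector \<Rightarrow> 'a::real_vector) \<Rightarrow> ('a,'b) gl1 \<Rightarrow> 'a \<times> 'b \<Rightarrow> 'a \<times> 'b" where
  "act1 d N \<xi> = (fst (fst N) (fst \<xi>), snd (fst N) (snd \<xi>) + snd N (fst \<xi> + d (snd \<xi>)))"

definition pair0 :: "('a::real_vector,'b::real_vector) om0 \<Rightarrow> ('a,'b) om0 \<Rightarrow> 'a" where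
  "pair0 e f = (1/2) *\<^sub>R (act0 (fst e) (snd f) + act0 (fst f) (snd e))"
definition pair1 :: "('b::real_vector \<Rightarrow> 'a::real_vector) \<Rightarrow> ('a,'b) om1 \<Rightarrow> ('a,'b) om1 \<Rightarrow> 'a \<times> 'b" where
  "pair1 d e f = (1/2) *\<^sub>R (act1 d (fst e) (snd f) + act1 d (fst f) (snd e))"

definition cbr0 :: "('a::real_vector,'b::real_vector) om0 \<Rightarrow> ('a,'b) om0 \<Rightarrow> ('a,'b) om0" where
  "cbr0 e f = (gl_br0 (fst e) (fst f), (1/2) *\<^sub>R (act0 (fst e) (snd f) - act0 (fst f) (snd e)))"
definition cbr1 :: "('b::real_vector \<Rightarrow> 'a::real_vector) \<Rightarrow> ('a,'b) om1 \<Rightarrow> ('a,'b) om1 \<Rightarrow> ('a,'b) om1" where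
  "cbr1 d e f = (gl_br1 d (fst e) (fst f), (1/2) *\<^sub>R (act1 d (fst e) (snd f) - act1 d (fst f) (snd e)))"

definition curly0 :: "('a::real_vector,'b::real_vector) om0 \<Rightarrow> ('a,'b) om0 \<Rightarrow> ('a,'b) om0" where
  "curly0 e f = (gl_br0 (fst e) (fst f), act0 (fst e) (snd f))"
definition curly1 :: "('b::real_vector \<Rightarrow> 'a::real_vector) \<Rightarrow> ('a,'b) om1 \<Rightarrow> ('a,'b) om1 \<Rightarrow> ('a,'b) om1" where
  "curly1 d e f = (gl_br1 d (fst e) (fst f), act1 d (fst e) (snd f))"

text \<open>Source, target, identity of the omni-Lie 2-algebra:
  s(A+phi+u+m) = A+u, t(A+phi+u+m) = (A + delta phi) + (u + d m), delta phi = (d phi, phi d).\<close>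
definition src1 :: "('a,'b) om1 \<Rightarrow> ('a,'b) om0" where
  "src1 e = (fst (fst e), fst (snd e))"
definition tgt1 :: "('b::real_vector \<Rightarrow> 'a::real_vector) \<Rightarrow> ('a,'b) om1 \<Rightarrow> ('a,'b) om0" where
  "tgt1 d e = ((\<lambda>x. fst (fst (fst e)) x + d (snd (fst e) x),
                \<lambda>y. snd (fst (fst e)) y + snd (fst e) (d y)),
               fst (snd e) + d (snd (snd e)))"
definition ident0 :: "('a::real_vector,'b::real_vector) om0 \<Rightarrow> ('a,'b) om1" where
  "ident0 e = ((fst e, \<lambda>x. 0), (snd e, 0))"

definition sub2 :: "('b::real_vector \<Rightarrow> 'a::real_vector) \<Rightarrow> ('a,'b) om0 set \<Rightarrow> ('a,'b) om1 set \<Rightarrow> bool" where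
  "sub2 d L0 L1 \<longleftrightarrow>
     L0 \<subseteq> Om0 d \<and> L1 \<subseteq> Om1 d \<and>
     om0_zero \<in> L0 \<and> (\<forall>e\<in>L0. \<forall>f\<in>L0. om0_add e f \<in> L0) \<and> (\<forall>c. \<forall>e\<in>L0. om0_scale c e \<in> L0) \<and>
     om1_zero \<in> L1 \<and> (\<forall>e\<in>L1. \<forall>f\<in>L1. om1_add e f \<in> L1) \<and> (\<forall>c. \<forall>e\<in>L1. om1_scale c e \<in> L1) \<and>
     (\<forall>e\<in>L1. src1 e \<in> L0 \<and> tgt1 d e \<in> L0) \<and> (\<forall>e\<in>L0. ident0 e \<in> L1)"

definition perp0 :: "('b::real_vector \<Rightarrow> 'a::real_vector) \<Rightarrow> ('a,'b) om0 set \<Rightarrow> ('a,'b) om0 set" where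
  "perp0 d L0 = {e \<in> Om0 d. \<forall>l\<in>L0. pair0 e l = 0}"
definition perp1 :: "('b::real_vector \<Rightarrow> 'a::real_vector) \<Rightarrow> ('a,'b) om1 set \<Rightarrow> ('a,'b) om1 set" where
  "perp1 d L1 = {e \<in> Om1 d. \<forall>l\<in>L1. pair1 d e l = 0}"

definition dirac :: "('b::real_vector \<Rightarrow> 'a::real_vector) \<Rightarrow> ('a,'b) om0 set \<Rightarrow> ('a,'b) om1 set \<Rightarrow> bool" where
  "dirac d L0 L1 \<longleftrightarrow> sub2 d L0 L1 \<and> L0 = perp0 d L0 \<and> L1 = perp1 d L1 \<and>
     (\<forall>e\<in>L0. \<forall>f\<in>L0. cbr0 e f \<in> L0) \<and> (\<forall>e\<in>L1. \<forall>f\<in>L1. cbr1 d e f \<in> L1)"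

text \<open>D = L \<inter> gl(V) and its annihilator D^0 (levelwise).\<close>
definition Dc0 :: "('a::real_vector,'b::real_vector) om0 set \<Rightarrow> ('a,'b) gl0 set" where
  "Dc0 L0 = {A. (A, 0) \<in> L0}"
definition Dc1 :: "('a::real_vector,'b::real_vector) om1 set \<Rightarrow> ('a,'b) gl1 set" where
  "Dc1 L1 = {N. (N, (0, 0)) \<in> L1}"
definition Ann0 :: "('a::real_vector,'b::real_vector) om0 set \<Rightarrow> 'a set" where
  "Ann0 L0 = {u. \<forall>A\<in>Dc0 L0. act0 A u = 0}"
definition Ann1 :: "('b::real_vector \<Rightarrow> 'a::real_vector) \<Rightarrow> ('a,'b) om1 set \<Rightarrow> ('a \<times> 'b) set" where
  "Ann1 d L1 = {\<xi>. \<forall>N\<in>Dc1 L1. act1 d N \<xi> = 0}"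

text \<open>(D, pi) is the characteristic pair of L: pi is a linear functor V -> gl(V),
  skew on D^0, and L = {X + pi(xi) + xi : X \<in> D, xi \<in> D^0}.\<close>
definition char_pair :: "('b::real_vector \<Rightarrow> 'a::real_vector) \<Rightarrow> ('a,'b) om0 set \<Rightarrow> ('a,'b) om1 set
    \<Rightarrow> ('a \<Rightarrow> ('a,'b) gl0) \<Rightarrow> ('a \<times> 'b \<Rightarrow> ('a,'b) gl1) \<Rightarrow> bool" where
  "char_pair d L0 L1 pi0 pi1 \<longleftrightarrow>
     (\<forall>u. pi0 u \<in> End0 d) \<and> (\<forall>\<xi>. pi1 \<xi> \<in> Gl1 d) \<and>
     (\<forall>u v. pi0 (u + v) = gl0_add (pi0 u) (pi0 v)) \<and> (\<forall>c u. pi0 (c *\<^sub>R u) = gl0_scale c (pi0 u)) \<and>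
     (\<forall>\<xi> \<eta>. pi1 (\<xi> + \<eta>) = gl1_add (pi1 \<xi>) (pi1 \<eta>)) \<and> (\<forall>c \<xi>. pi1 (c *\<^sub>R \<xi>) = gl1_scale c (pi1 \<xi>)) \<and>
     (\<forall>u m. fst (pi1 (u, m)) = pi0 u) \<and>
     (\<forall>u m. fst (tgt1 d (pi1 (u, m), (u, m))) = pi0 (u + d m)) \<and>
     (\<forall>u. pi1 (u, 0) = (pi0 u, \<lambda>x. 0)) \<and>
     (\<forall>u\<in>Ann0 L0. \<forall>v\<in>Ann0 L0. act0 (pi0 u) v = - act0 (pi0 v) u) \<and>
     (\<forall>\<xi>\<in>Ann1 d L1. \<forall>\<eta>\<in>Ann1 d L1. act1 d (pi1 \<xi>) \<eta> = - act1 d (pi1 \<eta>) \<xi>) \<and>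
     L0 = {(gl0_add X (pi0 u), u) | X u. X \<in> Dc0 L0 \<and> u \<in> Ann0 L0} \<and>
     L1 = {(gl1_add N (pi1 \<xi>), \<xi>) | N \<xi>. N \<in> Dc1 L1 \<and> \<xi> \<in> Ann1 d L1}"

definition brD0_0 :: "('a \<Rightarrow> ('a,'b) gl0) \<Rightarrow> 'a \<Rightarrow> 'a \<Rightarrow> 'a" where
  "brD0_0 pi0 u v = act0 (pi0 u) v"
definition brD0_1 :: "('b::real_vector \<Rightarrow> 'a::real_vector) \<Rightarrow> ('a \<times> 'b \<Rightarrow> ('a,'b) gl1) \<Rightarrow> 'a \<times> 'b \<Rightarrow> 'a \<times> 'b \<Rightarrow> 'a \<times> 'b" where
  "brD0_1 d pi1 \<xi> \<eta> = act1 d (pi1 \<xi>) \<eta>"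

text \<open>Normalizer N_K (levelwise), N viewed as N + 0.\<close>
definition normalizer0 :: "('b::real_vector \<Rightarrow> 'a::real_vector) \<Rightarrow> ('a,'b) om0 set \<Rightarrow> ('a,'b) gl0 set" where
  "normalizer0 d K0 = {N \<in> End0 d. \<forall>k\<in>K0. curly0 (N, 0) k \<in> K0}"
definition normalizer1 :: "('b::real_vector \<Rightarrow> 'a::real_vector) \<Rightarrow> ('a,'b) om1 set \<Rightarrow> ('a,'b) gl1 set" where
  "normalizer1 d K1 = {N \<in> Gl1 d. \<forall>k\<in>K1. curly1 d (N, (0, 0)) k \<in> K1}"

end

theory Submission
  imports Defs
begin

(* The normalizer theorem holds levelwise, and at both levels the argument is the same.
   Inside the locale we prove:
     (a) an operator of G killing D^0 lies in D (maximal isotropy);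
     (b) if N normalizes L then N preserves D and D^0, and N is a derivation of the
         bracket [xi,eta] = pi(xi)(eta) on D^0 (act N on (pi xi, xi) \<in> L and evaluate);
     (c) conversely, under these conditions the defect [N, pi xi] - pi(N xi) kills D^0,
         hence lies in D by (a), and then {N, X + pi xi + xi} lies again in L. *)

locale split_dirac =
  fixes G :: "'g set"
    and act :: "'g \<Rightarrow> 'v::real_vector \<Rightarrow> 'v"
    and br :: "'g \<Rightarrow> 'g \<Rightarrow> 'g"
    and add :: "'g \<Rightarrow> 'g \<Rightarrow> 'g"
    and sub :: "'g \<Rightarrow> 'g \<Rightarrow> 'g"
    and zero :: "'g"
    and pi :: "'v \<Rightarrow> 'g"
    and L :: "('g \<times> 'v) set"
    and D :: "'g set"
    and Ann :: "'v set"
  assumes D_iff: "X \<in> D \<longleftrightarrow> (X, 0) \<in> L"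
    and Ann_iff: "u \<in> Ann \<longleftrightarrow> (\<forall>X\<in>D. act X u = 0)"
    and L_split: "L = {(add X (pi u), u) | X u. X \<in> D \<and> u \<in> Ann}"
    and maximal_isotropic:
      "L = {e \<in> G \<times> UNIV. \<forall>l\<in>L. (1/2) *\<^sub>R (act (fst e) (snd l) + act (fst l) (snd e)) = 0}"
    and zero_in_D: "zero \<in> D"
    and add_closed_D: "X \<in> D \<Longrightarrow> Y \<in> D \<Longrightarrow> add X Y \<in> D"
    and pi_in_G: "pi u \<in> G"
    and br_in_G: "N \<in> G \<Longrightarrow> P \<in> G \<Longrightarrow> br N P \<in> G"
    and sub_in_G: "N \<in> G \<Longrightarrow> P \<in> G \<Longrightarrow> sub N P \<in> G"
    and act_br: "N \<in> G \<Longrightarrow> P \<in> G \<Longrightarrow> act (br N P) v = act N (act P v) - act P (act N v)"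
    and act_add: "act (add X P) v = act X v + act P v"
    and act_sub: "act (sub X P) v = act X v - act P v"
    and act_zero: "N \<in> G \<Longrightarrow> act N 0 = 0"
    and br_add: "N \<in> G \<Longrightarrow> br N (add X P) = add (br N X) (br N P)"
    and add_zero_left: "add zero P = P"
    and add_sub_cancel: "add (add A (sub B C)) C = add A B"
begin

lemma L_iff: "(A, u) \<in> L \<longleftrightarrow> (\<exists>X\<in>D. u \<in> Ann \<and> A = add X (pi u))"
  by (subst L_split) blast

lemma act_D_Ann: "X \<in> D \<Longrightarrow> v \<in> Ann \<Longrightarrow> act X v = 0"
  using Ann_iff by blast

lemma pi_in_L: "u \<in> Ann \<Longrightarrow> (pi u, u) \<in> L"
  using L_iff zero_in_D add_zero_left by metis

lemma L_in_G: "(A, u) \<in> L \<Longrightarrow> A \<in> G"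
  using maximal_isotropic by blast

text \<open>Maximal isotropy: an operator killing the annihilator D^0 already lies in D.\<close>
lemma annihilating_in_D:
  assumes "Y \<in> G" and kills: "\<forall>v\<in>Ann. act Y v = 0"
  shows "Y \<in> D"
proof -
  have "(1/2) *\<^sub>R (act Y v + act B 0) = (0::'v)" if "(B, v) \<in> L" for B v
    using that kills act_zero[OF L_in_G] L_iff by fastforce
  then have "(Y, 0) \<in> L"
    using \<open>Y \<in> G\<close> by (subst maximal_isotropic) auto
  then show ?thesis
    using D_iff by blast
qed

definition derivation_on_Ann :: "'g \<Rightarrow> bool" where
  "derivation_on_Ann N \<longleftrightarrow> (\<forall>\<xi>\<in>Ann. \<forall>\<eta>\<in>Ann. act N \<xi> \<in> Ann \<and>
     act N (act (pi \<xi>) \<eta>) = act (pi \<xi>) (act N \<eta>) + act (pi (act N \<xi>)) \<eta>)"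

lemma normalizer_preserves_D:
  assumes "N \<in> G" and norm: "\<forall>k\<in>L. (br N (fst k), act N (snd k)) \<in> L" and "X \<in> D"
  shows "br N X \<in> D"
  using norm \<open>X \<in> D\<close> act_zero[OF \<open>N \<in> G\<close>] D_iff by fastforce

lemma normalizer_derivation:
  assumes "N \<in> G" and norm: "\<forall>k\<in>L. (br N (fst k), act N (snd k)) \<in> L"
  shows "derivation_on_Ann N"
  unfolding derivation_on_Ann_def
proof (intro ballI conjI)
  fix \<xi> \<eta> assume \<xi>: "\<xi> \<in> Ann" and \<eta>: "\<eta> \<in> Ann"
  have "(br N (pi \<xi>), act N \<xi>) \<in> L"
    using norm pi_in_L[OF \<xi>] by fastforce
  then obtain X where X: "X \<in> D" and N\<xi>: "act N \<xi> \<in> Ann"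
    and split: "br N (pi \<xi>) = add X (pi (act N \<xi>))"
    using L_iff by blast
  show "act N \<xi> \<in> Ann" by (fact N\<xi>)
  have "act N (act (pi \<xi>) \<eta>) - act (pi \<xi>) (act N \<eta>) = act (br N (pi \<xi>)) \<eta>"
    using act_br[OF \<open>N \<in> G\<close> pi_in_G] by simp
  also have "\<dots> = act (pi (act N \<xi>)) \<eta>"
    using split act_add act_D_Ann[OF X \<eta>] by simp
  finally show "act N (act (pi \<xi>) \<eta>) = act (pi \<xi>) (act N \<eta>) + act (pi (act N \<xi>)) \<eta>"
    by (simp add: algebra_simps)
qed

text \<open>Conversely, for a derivation N the defect [N, pi u] - pi(N u) lies in D,
  which is exactly what is needed to move {N, X + pi u + u} back into L.\<close>
lemma derivation_normalizes:
  assumes "N \<in> G" and preserves: "\<forall>X\<in>D. br N X \<in> D" and der: "derivation_on_Ann N"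
    and "(A, u) \<in> L"
  shows "(br N A, act N u) \<in> L"
proof -
  obtain X where X: "X \<in> D" and u: "u \<in> Ann" and A: "A = add X (pi u)"
    using \<open>(A, u) \<in> L\<close> L_iff by blast
  define Y where "Y = sub (br N (pi u)) (pi (act N u))"
  have "Y \<in> G"
    unfolding Y_def using br_in_G[OF \<open>N \<in> G\<close> pi_in_G] pi_in_G by (rule sub_in_G)
  moreover have "\<forall>v\<in>Ann. act Y v = 0"
    using der u act_br[OF \<open>N \<in> G\<close> pi_in_G]
    by (simp add: Y_def act_sub derivation_on_Ann_def)
  ultimately have "Y \<in> D"
    by (rule annihilating_in_D)
  then have "add (br N X) Y \<in> D"
    using preserves X add_closed_D by blast
  moreover have "br N A = add (add (br N X) Y) (pi (act N u))"
    unfolding A Y_def add_sub_cancel by (rule br_add[OF \<open>N \<in> G\<close>])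
  moreover have "act N u \<in> Ann"
    using der u by (simp add: derivation_on_Ann_def)
  ultimately show ?thesis
    using L_iff by blast
qed

theorem normalizer_iff:
  assumes "N \<in> G"
  shows "(\<forall>k\<in>L. (br N (fst k), act N (snd k)) \<in> L) \<longleftrightarrow>
           (\<forall>X\<in>D. br N X \<in> D) \<and> derivation_on_Ann N"
  using normalizer_preserves_D[OF assms] normalizer_derivation[OF assms]
    derivation_normalizes[OF assms] by auto

end

text \<open>Subtraction on objects of gl(V), needed to form the defect [N, pi u] - pi(N u).\<close>
definition gl0_sub :: "('a::real_vector,'b::real_vector) gl0 \<Rightarrow> ('a,'b) gl0 \<Rightarrow> ('a,'b) gl0" where
  "gl0_sub A B = (\<lambda>x. fst A x - fst B x, \<lambda>y. snd A y - snd B y)"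

lemma End0_iff: "(N0, N1) \<in> End0 d \<longleftrightarrow> linear N0 \<and> linear N1 \<and> (\<forall>z. N0 (d z) = d (N1 z))"
  by (auto simp: End0_def fun_eq_iff)

lemma gl_br0_End0:
  assumes "linear d" "N \<in> End0 d" "P \<in> End0 d" shows "gl_br0 N P \<in> End0 d"
  using assms
  by (cases N, cases P) (auto intro!: linearI simp: End0_iff gl_br0_def linear_add linear_scale linear_diff algebra_simps)

lemma gl0_sub_End0:
  assumes "linear d" "N \<in> End0 d" "P \<in> End0 d" shows "gl0_sub N P \<in> End0 d"
  using assms
  by (cases N, cases P) (auto intro!: linearI simp: End0_iff gl0_sub_def linear_add linear_scale linear_diff algebra_simps)

lemma split_dirac_level0:
  fixes d :: "'b::real_vector \<Rightarrow> 'a::real_vector"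
  assumes ld: "linear d" and dir: "dirac d L0 L1" and cp: "char_pair d L0 L1 pi0 pi1"
  shows "split_dirac (End0 d) act0 gl_br0 gl0_add gl0_sub gl0_zero pi0 L0 (Dc0 L0) (Ann0 L0)"
proof
  have sub: "sub2 d L0 L1" and perp: "L0 = perp0 d L0"
    using dir by (auto simp: dirac_def)
  show "L0 = {e \<in> End0 d \<times> UNIV. \<forall>l\<in>L0. (1/2) *\<^sub>R (act0 (fst e) (snd l) + act0 (fst l) (snd e)) = 0}"
    by (subst perp) (simp add: perp0_def Om0_def pair0_def)
  show "gl0_zero \<in> Dc0 L0"
    using sub by (simp add: sub2_def Dc0_def om0_zero_def)
  show "gl0_add X Y \<in> Dc0 L0" if "X \<in> Dc0 L0" "Y \<in> Dc0 L0" for X Y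
  proof -
    have "\<forall>e\<in>L0. \<forall>f\<in>L0. om0_add e f \<in> L0"
      using sub by (simp add: sub2_def)
    then show ?thesis
      using that by (fastforce simp: Dc0_def om0_add_def)
  qed
  show "L0 = {(gl0_add X (pi0 u), u) | X u. X \<in> Dc0 L0 \<and> u \<in> Ann0 L0}"
    using cp unfolding char_pair_def by (elim conjE)
  show "pi0 u \<in> End0 d" for u
    using cp unfolding char_pair_def by (elim conjE) (erule spec)
  show "gl_br0 N P \<in> End0 d" "gl0_sub N P \<in> End0 d" if "N \<in> End0 d" "P \<in> End0 d" for N P
    using ld that by (rule gl_br0_End0, rule gl0_sub_End0)
  show "act0 N 0 = 0" if "N \<in> End0 d" for N
    using that by (cases N) (simp add: End0_iff act0_def linear_0)
  show "gl_br0 N (gl0_add X P) = gl0_add (gl_br0 N X) (gl_br0 N P)" if "N \<in> End0 d" for N X P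
    using that by (cases N) (simp add: End0_iff gl_br0_def gl0_add_def linear_add algebra_simps)
  show "X \<in> Dc0 L0 \<longleftrightarrow> (X, 0) \<in> L0" for X
    by (simp add: Dc0_def)
  show "u \<in> Ann0 L0 \<longleftrightarrow> (\<forall>X\<in>Dc0 L0. act0 X u = 0)" for u
    by (simp add: Ann0_def)
qed (simp_all add: act0_def gl_br0_def gl0_add_def gl0_sub_def gl0_zero_def)

definition gl1_sub :: "('a::real_vector,'b::real_vector) gl1 \<Rightarrow> ('a,'b) gl1 \<Rightarrow> ('a,'b) gl1" where
  "gl1_sub S T = (gl0_sub (fst S) (fst T), \<lambda>x. snd S x - snd T x)"

lemma Gl1_iff:
  "((N0, N1), f) \<in> Gl1 d \<longleftrightarrow> linear N0 \<and> linear N1 \<and> (\<forall>z. N0 (d z) = d (N1 z)) \<and> linear f"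
  by (auto simp: Gl1_def End0_iff)

lemma gl_br1_Gl1:
  assumes "linear d" "N \<in> Gl1 d" "P \<in> Gl1 d" shows "gl_br1 d N P \<in> Gl1 d"
proof -
  obtain N0 N1 f P0 P1 g where N: "N = ((N0, N1), f)" and P: "P = ((P0, P1), g)"
    by (metis prod.collapse)
  show ?thesis
    using assms unfolding N P gl_br1_def gl_br0_def Gl1_iff fst_conv snd_conv
    by (auto intro!: linearI simp: linear_add linear_scale linear_diff algebra_simps)
qed

lemma gl1_sub_Gl1:
  assumes "linear d" "N \<in> Gl1 d" "P \<in> Gl1 d" shows "gl1_sub N P \<in> Gl1 d"
proof -
  obtain N0 N1 f P0 P1 g where N: "N = ((N0, N1), f)" and P: "P = ((P0, P1), g)"
    by (metis prod.collapse)
  show ?thesis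
    using assms unfolding N P gl1_sub_def gl0_sub_def
    by (auto intro!: linearI simp: Gl1_iff linear_add linear_scale linear_diff algebra_simps)
qed

lemma act1_gl_br1:
  assumes "linear d" "N \<in> Gl1 d" "P \<in> Gl1 d"
  shows "act1 d (gl_br1 d N P) v = act1 d N (act1 d P v) - act1 d P (act1 d N v)"
proof -
  obtain N0 N1 f P0 P1 g where N: "N = ((N0, N1), f)" and P: "P = ((P0, P1), g)"
    by (metis prod.collapse)
  have "linear N0" "linear N1" "linear P0" "linear P1" "linear f" "linear g"
    and "\<And>z. N0 (d z) = d (N1 z)" "\<And>z. P0 (d z) = d (P1 z)"
    using assms N P by (auto simp: Gl1_iff)
  then show ?thesis
    using assms(1) unfolding N P act1_def gl_br1_def gl_br0_def
    by (cases v) (simp add: linear_add linear_diff algebra_simps)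
qed

lemma split_dirac_level1:
  fixes d :: "'b::real_vector \<Rightarrow> 'a::real_vector"
  assumes ld: "linear d" and dir: "dirac d L0 L1" and cp: "char_pair d L0 L1 pi0 pi1"
  shows "split_dirac (Gl1 d) (act1 d) (gl_br1 d) gl1_add gl1_sub gl1_zero pi1 L1 (Dc1 L1) (Ann1 d L1)"
proof
  have sub: "sub2 d L0 L1" and perp: "L1 = perp1 d L1"
    using dir by (auto simp: dirac_def)
  show "X \<in> Dc1 L1 \<longleftrightarrow> (X, 0) \<in> L1" for X
    by (simp add: Dc1_def zero_prod_def)
  show "L1 = {e \<in> Gl1 d \<times> UNIV. \<forall>l\<in>L1. (1/2) *\<^sub>R (act1 d (fst e) (snd l) + act1 d (fst l) (snd e)) = 0}"
    by (subst perp) (simp add: perp1_def Om1_def pair1_def)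
  show "gl1_zero \<in> Dc1 L1"
    using sub by (simp add: sub2_def Dc1_def om1_zero_def zero_prod_def)
  show "gl1_add X Y \<in> Dc1 L1" if "X \<in> Dc1 L1" "Y \<in> Dc1 L1" for X Y
  proof -
    have "\<forall>e\<in>L1. \<forall>f\<in>L1. om1_add e f \<in> L1"
      using sub by (simp add: sub2_def)
    then show ?thesis
      using that by (fastforce simp: Dc1_def om1_add_def)
  qed
  show "L1 = {(gl1_add X (pi1 u), u) | X u. X \<in> Dc1 L1 \<and> u \<in> Ann1 d L1}"
    using cp unfolding char_pair_def by (elim conjE)
  show "pi1 u \<in> Gl1 d" for u
    using cp unfolding char_pair_def by (elim conjE) (erule spec)
  show "gl_br1 d N P \<in> Gl1 d" "gl1_sub N P \<in> Gl1 d"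
    "act1 d (gl_br1 d N P) v = act1 d N (act1 d P v) - act1 d P (act1 d N v)"
    if "N \<in> Gl1 d" "P \<in> Gl1 d" for N P v
    using ld that by (rule gl_br1_Gl1, rule gl1_sub_Gl1, rule act1_gl_br1)
  show "act1 d N 0 = 0" if "N \<in> Gl1 d" for N
    using that ld by (cases N) (auto simp: act1_def Gl1_def End0_def linear_0 zero_prod_def)
  show "gl_br1 d N (gl1_add X P) = gl1_add (gl_br1 d N X) (gl_br1 d N P)" if "N \<in> Gl1 d" for N X P
    using that ld
    by (cases N) (auto simp: Gl1_def End0_iff gl_br1_def gl_br0_def gl1_add_def gl0_add_def
        linear_add algebra_simps)
qed (auto simp: Ann1_def act1_def gl1_add_def gl0_add_def gl1_sub_def gl0_sub_def
      gl1_zero_def gl0_zero_def)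

theorem mainTheorem10:
  fixes d :: "'b::euclidean_space \<Rightarrow> 'a::euclidean_space"
    and L0 :: "('a,'b) om0 set" and L1 :: "('a,'b) om1 set"
    and pi0 :: "'a \<Rightarrow> ('a,'b) gl0" and pi1 :: "'a \<times> 'b \<Rightarrow> ('a,'b) gl1"
  assumes "linear d"
    and "dirac d L0 L1"
    and "char_pair d L0 L1 pi0 pi1"
  shows "(\<forall>N\<in>End0 d. N \<in> normalizer0 d L0 \<longleftrightarrow>
            (\<forall>X\<in>Dc0 L0. gl_br0 N X \<in> Dc0 L0) \<and>
            (\<forall>\<xi>\<in>Ann0 L0. \<forall>\<eta>\<in>Ann0 L0. act0 N \<xi> \<in> Ann0 L0 \<and>
               act0 N (brD0_0 pi0 \<xi> \<eta>) = brD0_0 pi0 \<xi> (act0 N \<eta>) + brD0_0 pi0 (act0 N \<xi>) \<eta>))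
       \<and> (\<forall>N\<in>Gl1 d. N \<in> normalizer1 d L1 \<longleftrightarrow>
            (\<forall>X\<in>Dc1 L1. gl_br1 d N X \<in> Dc1 L1) \<and>
            (\<forall>\<xi>\<in>Ann1 d L1. \<forall>\<eta>\<in>Ann1 d L1. act1 d N \<xi> \<in> Ann1 d L1 \<and>
               act1 d N (brD0_1 d pi1 \<xi> \<eta>) = brD0_1 d pi1 \<xi> (act1 d N \<eta>) + brD0_1 d pi1 (act1 d N \<xi>) \<eta>))"
proof -
  interpret level0: split_dirac "End0 d" act0 gl_br0 gl0_add gl0_sub gl0_zero pi0 L0 "Dc0 L0" "Ann0 L0"
    using assms by (rule split_dirac_level0)
  interpret level1: split_dirac "Gl1 d" "act1 d" "gl_br1 d" gl1_add gl1_sub gl1_zero pi1 L1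
      "Dc1 L1" "Ann1 d L1"
    using assms by (rule split_dirac_level1)
  show ?thesis
    using level0.normalizer_iff level1.normalizer_iff
    by (simp add: normalizer0_def normalizer1_def curly0_def curly1_def brD0_0_def brD0_1_def
        level0.derivation_on_Ann_def level1.derivation_on_Ann_def)
qed

end
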